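(* Let $K$ be a field and $L$ a finite extension of $K$ of degree $n$. Let $(x_1,\dots,x_k)$ and $(y_1,\dots,y_\ell)$ be two $K$-linearly independent families of elements of $L$, and suppose $k+\ell\geqslant n+1$. Then the set $\{x_iy_j\ ;\ 1\leqslant i\leqslant k,\ 1\leqslant j\leqslant\ell\}$ spans $L$ as a $K$-vector space. *)

theory Defs
  imports "HOL-Algebra.Embedded_Algebras"
begin

end

theory Submission
  imports Defs
begin

(* Suppose the products x_i y_j span a proper subspace. Then some K-linear functional phi on L
   with phi v = 1 for some v vanishes on every x_i y_j. Complete (y_j) to a basis
   z_1, ..., z_m, y_1, ..., y_l of L; then m = n - l < k, so the linear map
   a |-> (phi (a z_1), ..., phi (a z_m)) has a nonzero zero a in the span of the x_i.
   By bilinearity phi (a y_j) = 0 as well, so phi (b a) = 0 for every b in L. As a is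
   invertible, taking b = v a^-1 gives phi v = 0, a contradiction. *)

definition (in ring) linear_map :: "'a set \<Rightarrow> ('a \<Rightarrow> 'a) \<Rightarrow> bool"
  where "linear_map K f \<longleftrightarrow> f \<in> carrier R \<rightarrow> carrier R
    \<and> (\<forall>a \<in> carrier R. \<forall>b \<in> carrier R. f (a \<oplus> b) = f a \<oplus> f b)
    \<and> (\<forall>k \<in> K. \<forall>a \<in> carrier R. f (k \<otimes> a) = k \<otimes> f a)"

definition (in ring) line_coordinate :: "'a set \<Rightarrow> 'a \<Rightarrow> 'a set \<Rightarrow> 'a \<Rightarrow> 'a"
  where "line_coordinate K v E a = (THE k. k \<in> K \<and> (\<exists>h \<in> E. a = k \<otimes> v \<oplus> h))"

context ring
begin

lemma linear_mapI:
  assumes "\<And>a. a \<in> carrier R \<Longrightarrow> f a \<in> carrier R"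
    and "\<And>a b. a \<in> carrier R \<Longrightarrow> b \<in> carrier R \<Longrightarrow> f (a \<oplus> b) = f a \<oplus> f b"
    and "\<And>k a. k \<in> K \<Longrightarrow> a \<in> carrier R \<Longrightarrow> f (k \<otimes> a) = k \<otimes> f a"
  shows "linear_map K f"
  using assms unfolding linear_map_def by blast

lemma linear_map_closed: "linear_map K f \<Longrightarrow> a \<in> carrier R \<Longrightarrow> f a \<in> carrier R"
  unfolding linear_map_def by blast

lemma linear_map_add:
  "linear_map K f \<Longrightarrow> a \<in> carrier R \<Longrightarrow> b \<in> carrier R \<Longrightarrow> f (a \<oplus> b) = f a \<oplus> f b"
  unfolding linear_map_def by blast

lemma linear_map_smult:
  "linear_map K f \<Longrightarrow> k \<in> K \<Longrightarrow> a \<in> carrier R \<Longrightarrow> f (k \<otimes> a) = k \<otimes> f a"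
  unfolding linear_map_def by blast

lemma linear_map_zero:
  assumes "linear_map K f" shows "f \<zero> = \<zero>"
proof -
  have "f \<zero> \<oplus> f \<zero> = f \<zero>"
    using linear_map_add[OF assms, of \<zero> \<zero>] by simp
  thus ?thesis
    using linear_map_closed[OF assms] by simp
qed

lemma linear_map_comp:
  "linear_map K f \<Longrightarrow> linear_map K g \<Longrightarrow> linear_map K (f \<circ> g)"
  by (rule linear_mapI) (simp_all add: linear_map_closed linear_map_add linear_map_smult)

lemma linear_map_mult_right:
  assumes "K \<subseteq> carrier R" and "y \<in> carrier R" shows "linear_map K (\<lambda>a. a \<otimes> y)"
  using assms by (intro linear_mapI) (auto simp: l_distr m_assoc)

context
  fixes K :: "'a set" assumes K: "subfield K R"
begin

lemma linear_map_combine: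
  assumes "linear_map K f"
  shows "set Ks \<subseteq> K \<Longrightarrow> set Us \<subseteq> carrier R \<Longrightarrow> f (combine Ks Us) = combine Ks (map f Us)"
proof (induct Ks Us rule: combine.induct)
  case (1 k Ks u Us)
  hence "k \<in> carrier R" "set Ks \<subseteq> carrier R"
    using subringE(1)[OF subfieldE(1)[OF K]] by auto
  with 1 show ?case
    by (simp add: linear_map_add[OF assms] linear_map_smult[OF assms] combine_in_carrier)
qed (simp_all add: linear_map_zero[OF assms])

lemma linear_map_vanishes_on_Span:
  assumes "linear_map K f" and "set Us \<subseteq> carrier R" and "\<And>u. u \<in> set Us \<Longrightarrow> f u = \<zero>"
  shows "a \<in> Span K Us \<Longrightarrow> f a = \<zero>"
  using assms(2,3)
proof (induct Us arbitrary: a)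
  case Nil thus ?case using linear_map_zero[OF assms(1)] by simp
next
  case (Cons u Us)
  then obtain k h where "k \<in> K" "h \<in> Span K Us" "a = k \<otimes> u \<oplus> h"
    using line_extension_mem_iff by auto
  moreover have "k \<in> carrier R" "h \<in> carrier R"
    using calculation Cons(3) subfieldE(3)[OF K] Span_in_carrier by auto
  ultimately show ?case
    using Cons by (simp add: linear_map_add[OF assms(1)] linear_map_smult[OF assms(1)])
qed

lemma line_extension_coeff_unique:
  assumes "independent K (v # Ws)"
    and "k \<in> K" "k' \<in> K" "h \<in> Span K Ws" "h' \<in> Span K Ws"
    and eq: "k \<otimes> v \<oplus> h = k' \<otimes> v \<oplus> h'"
  shows "k = k'"
proof (rule ccontr)
  assume "k \<noteq> k'"
  have Ws: "set Ws \<subseteq> carrier R" and v: "v \<in> carrier R" "v \<notin> Span K Ws"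
    using independent_backwards[OF assms(1)] independent_in_carrier by auto
  have carr: "k \<in> carrier R" "k' \<in> carrier R" "h \<in> carrier R" "h' \<in> carrier R"
    using assms(2-5) subfieldE(3)[OF K] Span_in_carrier[OF subfieldE(3)[OF K] Ws] by auto
  have "(k \<ominus> k') \<otimes> v = (k \<otimes> v \<oplus> h) \<ominus> (k' \<otimes> v \<oplus> h)"
    using carr v by algebra
  also have "\<dots> = h' \<ominus> h"
    unfolding eq using carr v by algebra
  finally have "(k \<ominus> k') \<otimes> v \<in> Span K Ws"
    using assms(4,5) Span_subgroup_props[OF K Ws] unfolding minus_eq by simp
  moreover have "k \<ominus> k' \<in> K"
    using assms(2,3) subringE(5,7)[OF subfieldE(1)[OF K]] unfolding minus_eq by blast
  moreover have "k \<ominus> k' \<noteq> \<zero>"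
    using \<open>k \<noteq> k'\<close> carr by simp
  ultimately have "v \<in> Span K Ws"
    using Span_m_inv_simprule[OF K Ws _ v(1)] by blast
  with v(2) show False ..
qed

lemma line_coordinate_eq:
  assumes "independent K (v # Ws)" and "k \<in> K" "h \<in> Span K Ws"
  shows "line_coordinate K v (Span K Ws) (k \<otimes> v \<oplus> h) = k"
  unfolding line_coordinate_def
  using assms line_extension_coeff_unique[OF assms(1)] by (intro the_equality) blast+

lemma line_coordinate_linear:
  assumes ind: "independent K (v # Ws)" and spans: "Span K (v # Ws) = carrier R"
  shows "linear_map K (line_coordinate K v (Span K Ws))"
    and "line_coordinate K v (Span K Ws) ` carrier R \<subseteq> K"
proof -
  let ?c = "line_coordinate K v (Span K Ws)"
  have Ws: "set Ws \<subseteq> carrier R" and v: "v \<in> carrier R"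
    using independent_backwards[OF ind] independent_in_carrier by auto
  have KR: "K \<subseteq> carrier R" and HR: "Span K Ws \<subseteq> carrier R"
    using subfieldE(3)[OF K] Span_in_carrier[OF subfieldE(3)[OF K] Ws] by auto
  have decomp: "\<exists>k \<in> K. \<exists>h \<in> Span K Ws. a = k \<otimes> v \<oplus> h" if "a \<in> carrier R" for a
    using that spans line_extension_mem_iff by auto
  show "?c ` carrier R \<subseteq> K"
    using decomp line_coordinate_eq[OF ind] by fastforce
  show "linear_map K ?c"
  proof (rule linear_mapI)
    show "?c a \<in> carrier R" if "a \<in> carrier R" for a
      using that decomp line_coordinate_eq[OF ind] KR by fastforce
  next
    fix a b assume "a \<in> carrier R" "b \<in> carrier R"
    then obtain k h k' h' where kh: "k \<in> K" "h \<in> Span K Ws" "a = k \<otimes> v \<oplus> h"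
      and kh': "k' \<in> K" "h' \<in> Span K Ws" "b = k' \<otimes> v \<oplus> h'"
      using decomp by meson
    have "k \<in> carrier R" "k' \<in> carrier R" "h \<in> carrier R" "h' \<in> carrier R"
      using kh kh' KR HR by auto
    hence "a \<oplus> b = (k \<oplus> k') \<otimes> v \<oplus> (h \<oplus> h')"
      unfolding kh(3) kh'(3) using v by algebra
    moreover have "k \<oplus> k' \<in> K"
      using kh kh' subringE(7)[OF subfieldE(1)[OF K]] by blast
    moreover have "h \<oplus> h' \<in> Span K Ws"
      using kh kh' Span_subgroup_props(3)[OF K Ws] by blast
    ultimately show "?c (a \<oplus> b) = ?c a \<oplus> ?c b"
      using kh kh' line_coordinate_eq[OF ind] by simp
  next
    fix c a assume "c \<in> K" "a \<in> carrier R"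
    then obtain k h where kh: "k \<in> K" "h \<in> Span K Ws" "a = k \<otimes> v \<oplus> h"
      using decomp by meson
    have "c \<in> carrier R" "k \<in> carrier R" "h \<in> carrier R"
      using kh \<open>c \<in> K\<close> KR HR by auto
    hence "c \<otimes> a = (c \<otimes> k) \<otimes> v \<oplus> c \<otimes> h"
      unfolding kh(3) using v by algebra
    moreover have "c \<otimes> k \<in> K"
      using kh \<open>c \<in> K\<close> subringE(6)[OF subfieldE(1)[OF K]] by blast
    moreover have "c \<otimes> h \<in> Span K Ws"
      using kh \<open>c \<in> K\<close> Span_smult_closed[OF K Ws] by blast
    ultimately show "?c (c \<otimes> a) = c \<otimes> ?c a"
      using kh \<open>c \<in> K\<close> line_coordinate_eq[OF ind] by simp
  qed
qed

lemma functional_vanishing_on_proper_Span: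
  assumes dim: "dimension n K (carrier R)" and Us: "set Us \<subseteq> carrier R"
    and proper: "Span K Us \<noteq> carrier R"
  obtains \<phi> v where "linear_map K \<phi>" "\<phi> ` carrier R \<subseteq> K" "v \<in> carrier R" "\<phi> v = \<one>"
    "\<And>u. u \<in> Span K Us \<Longrightarrow> \<phi> u = \<zero>"
proof -
  obtain Bs where Bs: "independent K Bs" "Span K Bs = Span K Us"
    using filter_base[OF K Us] by blast
  obtain Vs where Vs: "independent K (Vs @ Bs)" "Span K (Vs @ Bs) = carrier R"
    using complete_base[OF K dim Bs(1)] independent_in_carrier[OF Bs(1)] by blast
  obtain v Ws where "Vs = v # Ws"
    using Vs(2) Bs(2) proper by (cases Vs) auto
  hence ind: "independent K (v # (Ws @ Bs))" and spans: "Span K (v # (Ws @ Bs)) = carrier R"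
    using Vs by simp_all
  have v: "v \<in> carrier R" and WsBs: "set (Ws @ Bs) \<subseteq> carrier R"
    using independent_backwards(3)[OF ind] independent_in_carrier[OF independent_backwards(2)[OF ind]]
    by auto
  let ?\<phi> = "line_coordinate K v (Span K (Ws @ Bs))"
  have zero_on: "?\<phi> h = \<zero>" if "h \<in> Span K (Ws @ Bs)" for h
    using line_coordinate_eq[OF ind _ that] subringE(2)[OF subfieldE(1)[OF K]] that v
      Span_in_carrier[OF subfieldE(3)[OF K] WsBs] by (metis l_null l_zero subsetD zero_closed)
  show thesis
  proof (rule that[of ?\<phi> v])
    show "linear_map K ?\<phi>" "?\<phi> ` carrier R \<subseteq> K"
      using line_coordinate_linear[OF ind spans] by auto
    show "v \<in> carrier R" by (fact v)
    show "?\<phi> v = \<one>"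
      using line_coordinate_eq[OF ind subringE(3)[OF subfieldE(1)[OF K]]
          Span_subgroup_props(2)[OF K WsBs]] v by simp
    show "?\<phi> u = \<zero>" if "u \<in> Span K Us" for u
      using that zero_on mono_Span_append(2)[OF K, of Bs Ws] WsBs Bs(2) by auto
  qed
qed

lemma linear_map_kernel_nontrivial:
  assumes f: "linear_map K f" and Us: "independent K Us" and Vs: "independent K Vs"
    and into: "f ` set Us \<subseteq> Span K Vs" and shorter: "length Vs < length Us"
  obtains a where "a \<in> Span K Us" "a \<noteq> \<zero>" "f a = \<zero>"
proof -
  have Us_carr: "set Us \<subseteq> carrier R"
    using independent_in_carrier[OF Us] .
  have "dependent K (map f Us)"
  proof
    assume "independent K (map f Us)"
    moreover have "set (map f Us) \<subseteq> Span K Vs"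
      using into by simp
    ultimately have "length (map f Us) \<le> length Vs"
      using independent_length_le[OF K _ Vs] by blast
    with shorter show False by simp
  qed
  moreover have "set (map f Us) \<subseteq> carrier R"
    using Us_carr linear_map_closed[OF f] by auto
  ultimately obtain Cs where Cs: "length Cs = length Us" "combine Cs (map f Us) = \<zero>"
    "set Cs \<subseteq> K" "set Cs \<noteq> {\<zero>}"
    using dependent_imp_non_trivial_combine[OF K] by (metis length_map)
  show thesis
  proof (rule that[of "combine Cs Us"])
    show "combine Cs Us \<in> Span K Us"
      using Span_mem_iff_length_version[OF K Us_carr] Cs by blast
    show "f (combine Cs Us) = \<zero>"
      using linear_map_combine[OF f Cs(3) Us_carr] Cs(2) by simp
    show "combine Cs Us \<noteq> \<zero>"
    proof
      assume "combine Cs Us = \<zero>"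
      hence "set Cs \<subseteq> {\<zero>}"
        using independent_imp_trivial_combine[OF K Us Cs(3)] Cs(1) by simp
      moreover have "Cs \<noteq> []"
        using Cs(1) shorter by auto
      ultimately show False
        using Cs(4) by (metis set_empty subset_singletonD)
    qed
  qed
qed

lemma linear_functionals_common_zero:
  assumes Us: "independent K Us" and Vs: "independent K Vs" and shorter: "length Vs < length Us"
    and F: "\<And>v. v \<in> set Vs \<Longrightarrow> linear_map K (F v)" "\<And>v. v \<in> set Vs \<Longrightarrow> F v ` carrier R \<subseteq> K"
  obtains a where "a \<in> Span K Us" "a \<noteq> \<zero>" "\<And>v. v \<in> set Vs \<Longrightarrow> F v a = \<zero>"
proof -
  have Vs_carr: "set Vs \<subseteq> carrier R" and KR: "K \<subseteq> carrier R"
    using independent_in_carrier[OF Vs] subfieldE(3)[OF K] by auto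
  \<comment> \<open>The functionals are bundled into a single linear map into \<open>Span K Vs\<close>,
      with \<open>Vs\<close> itself serving as the coordinate basis.\<close>
  define coeffs where "coeffs a = map (\<lambda>v. F v a) Vs" for a
  have coeffs_K: "set (coeffs a) \<subseteq> K" if "a \<in> carrier R" for a
    using F(2) that unfolding coeffs_def by auto
  hence coeffs_carr: "set (coeffs a) \<subseteq> carrier R" if "a \<in> carrier R" for a
    using that KR by blast
  have "linear_map K (\<lambda>a. combine (coeffs a) Vs)"
  proof (rule linear_mapI)
    fix a b assume "a \<in> carrier R" "b \<in> carrier R"
    moreover have "coeffs (a \<oplus> b) = map2 (\<oplus>) (coeffs a) (coeffs b)"
      using calculation unfolding coeffs_def
      by (simp add: linear_map_add[OF F(1)] zip_map1 zip_map2 zip_same_conv_map)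
    ultimately show "combine (coeffs (a \<oplus> b)) Vs = combine (coeffs a) Vs \<oplus> combine (coeffs b) Vs"
      using combine_add[OF _ _ coeffs_carr coeffs_carr Vs_carr] by (simp add: coeffs_def)
  next
    fix k a assume "k \<in> K" "a \<in> carrier R"
    moreover have "coeffs (k \<otimes> a) = map ((\<otimes>) k) (coeffs a)"
      using calculation unfolding coeffs_def by (simp add: linear_map_smult[OF F(1)])
    ultimately show "combine (coeffs (k \<otimes> a)) Vs = k \<otimes> combine (coeffs a) Vs"
      using combine_r_distr[OF coeffs_carr Vs_carr] KR by auto
  qed (use coeffs_carr Vs_carr in blast)
  moreover have "combine (coeffs a) Vs \<in> Span K Vs" if "a \<in> carrier R" for a
    using coeffs_K[OF that]
    by (intro Span_mem_iff_length_version[OF K Vs_carr, THEN iffD2] exI[of _ "coeffs a"])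
      (simp add: coeffs_def)
  hence "(\<lambda>a. combine (coeffs a) Vs) ` set Us \<subseteq> Span K Vs"
    using independent_in_carrier[OF Us] by blast
  ultimately obtain a where a: "a \<in> Span K Us" "a \<noteq> \<zero>" "combine (coeffs a) Vs = \<zero>"
    using linear_map_kernel_nontrivial[OF _ Us Vs _ shorter] by blast
  have "a \<in> carrier R"
    using a(1) Span_in_carrier[OF KR independent_in_carrier[OF Us]] by blast
  hence "set (coeffs a) \<subseteq> {\<zero>}"
    using independent_imp_trivial_combine[OF K Vs coeffs_K a(3)] by (simp add: coeffs_def)
  hence "F v a = \<zero>" if "v \<in> set Vs" for v
    using that unfolding coeffs_def by auto
  with a that show thesis by blast
qed

end
end

context field
begin

lemma functional_vanishing_on_multiples_imp_zero:
  assumes v: "v \<in> carrier R" "\<phi> v \<noteq> \<zero>" and a: "a \<in> carrier R"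
    and vanish: "\<And>b. b \<in> carrier R \<Longrightarrow> \<phi> (b \<otimes> a) = \<zero>"
  shows "a = \<zero>"
proof (rule ccontr)
  assume "a \<noteq> \<zero>"
  hence "a \<in> Units R"
    using a field_Units by blast
  hence "v = (v \<otimes> inv a) \<otimes> a" and "v \<otimes> inv a \<in> carrier R"
    using v(1) a by (simp_all add: m_assoc)
  with vanish v(2) show False by metis
qed

lemma independent_lengths_le_if_functional_vanishes_on_products:
  assumes K: "subfield K R" and dim: "dimension n K (carrier R)"
    and xs: "independent K xs" and ys: "independent K ys"
    and \<phi>: "linear_map K \<phi>" "\<phi> ` carrier R \<subseteq> K" and v: "v \<in> carrier R" "\<phi> v \<noteq> \<zero>"
    and products: "\<And>x y. x \<in> set xs \<Longrightarrow> y \<in> set ys \<Longrightarrow> \<phi> (x \<otimes> y) = \<zero>"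
  shows "length xs + length ys \<le> n"
proof (rule ccontr)
  assume long: "\<not> length xs + length ys \<le> n"
  have KR: "K \<subseteq> carrier R" and xs_carr: "set xs \<subseteq> carrier R"
    using subfieldE(3)[OF K] independent_in_carrier[OF xs] .
  obtain zs where basis: "length (zs @ ys) = n" "independent K (zs @ ys)" "Span K (zs @ ys) = carrier R"
    using complete_base[OF K dim ys independent_in_carrier[OF ys]] by blast
  have basis_carr: "set (zs @ ys) \<subseteq> carrier R"
    using independent_in_carrier[OF basis(2)] .
  have \<phi>_mult: "linear_map K (\<lambda>a. \<phi> (a \<otimes> w))" if "w \<in> carrier R" for w
    using linear_map_comp[OF \<phi>(1) linear_map_mult_right[OF KR that]] by (simp add: comp_def)
  obtain a where a: "a \<in> Span K xs" "a \<noteq> \<zero>" and on_zs: "\<And>z. z \<in> set zs \<Longrightarrow> \<phi> (a \<otimes> z) = \<zero>"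
  proof (rule linear_functionals_common_zero[OF K xs independent_split(2)[OF K basis(2)]])
    show "length zs < length xs"
      using basis(1) long by simp
    fix z assume "z \<in> set zs"
    hence z: "z \<in> carrier R"
      using basis_carr by auto
    show "linear_map K (\<lambda>a. \<phi> (a \<otimes> z))"
      using \<phi>_mult[OF z] .
    show "(\<lambda>a. \<phi> (a \<otimes> z)) ` carrier R \<subseteq> K"
      using \<phi>(2) z by blast
  qed (use that in blast)
  have on_ys: "\<phi> (a \<otimes> y) = \<zero>" if "y \<in> set ys" for y
    using linear_map_vanishes_on_Span[OF K \<phi>_mult xs_carr _ a(1)] that ys products
    by (auto dest: independent_in_carrier)
  have a_carr: "a \<in> carrier R"
    using a(1) Span_in_carrier[OF KR xs_carr] by blast
  have "\<phi> (w \<otimes> a) = \<zero>" if "w \<in> set (zs @ ys)" for w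
    using that on_zs on_ys m_comm[OF a_carr] basis_carr by (metis Un_iff set_append subsetD)
  hence annihilates: "\<phi> (b \<otimes> a) = \<zero>" if "b \<in> carrier R" for b
    using linear_map_vanishes_on_Span[OF K \<phi>_mult[OF a_carr] basis_carr] that basis(3) by blast
  have "a = \<zero>"
    using functional_vanishing_on_multiples_imp_zero[OF v a_carr annihilates] .
  with a(2) show False ..
qed

end

theorem mainTheorem3:
  fixes L (structure) and K :: "'a set" and n :: nat
    and xs ys :: "'a list"
  assumes "field L"
    and "subfield K L"
    and "ring.dimension L n K (carrier L)"
    and "set xs \<subseteq> carrier L" and "set ys \<subseteq> carrier L"
    and "ring.independent L K xs"
    and "ring.independent L K ys"
    and "length xs + length ys \<ge> n + 1"
  shows "ring.Span L K [x \<otimes>\<^bsub>L\<^esub> y. x \<leftarrow> xs, y \<leftarrow> ys] = carrier L"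
proof (rule ccontr)
  interpret field L by fact
  let ?Ps = "[x \<otimes> y. x \<leftarrow> xs, y \<leftarrow> ys]"
  have Ps: "set ?Ps \<subseteq> carrier L"
    using assms(4,5) by auto
  assume "Span K ?Ps \<noteq> carrier L"
  then obtain \<phi> v where \<phi>: "linear_map K \<phi>" "\<phi> ` carrier L \<subseteq> K" and v: "v \<in> carrier L" "\<phi> v = \<one>"
    and vanish: "\<And>u. u \<in> Span K ?Ps \<Longrightarrow> \<phi> u = \<zero>"
    using functional_vanishing_on_proper_Span[OF assms(2,3) Ps] by blast
  have "\<phi> (x \<otimes> y) = \<zero>" if "x \<in> set xs" "y \<in> set ys" for x y
    using that vanish Span_base_incl[OF assms(2) Ps] by auto
  hence "length xs + length ys \<le> n"
    using independent_lengths_le_if_functional_vanishes_on_products[OF assms(2,3,6,7) \<phi> v(1)] v(2)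
    by simp
  with assms(8) show False by simp
qed

end
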